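(* Consider algorithm PredFL (defined in the context) on any instance of Online Facility Location with predictions. If $\eta_1=0$, i.e., every prediction $\hat f_x$ coincides with the facility $c^*_x$ to which $x$ is assigned in a fixed optimal offline solution, then the expected cost of PredFL is at most $2\cdot\mathrm{OPT}$; that is, PredFL is $2$-competitive.
   Context: Online Facility Location (OFL): a metric space $(\mathcal M,d)$ and a uniform facility opening cost $f>0$. Demands $x\in\mathcal M$ arrive one by one; each must be connected upon arrival to an open facility, paying its distance; opened facilities cost $f$ each and cannot be closed. The cost is $f\cdot|\mathcal F|+\sum_x\min_{y\in\mathcal F}d(x,y)$, $\mathcal F$ the set of opened facilities; $\mathrm{OPT}$ denotes the optimal offline cost. Fix an optimal offline solution; for each demand $x$, $c^*_x$ denotes the optimal facility $x$ is connected to. With each demand $x$ the algorithm also receives a prediction $\hat f_x\in\mathcal M$. The error of $x$ is $\eta_x=d(\hat f_x,c^*_x)$, $\eta_1=\sum_x\eta_x$, $\eta_\infty=\max_x\eta_x$. Algorithm PredFL: maintain the set $\mathcal O$ of open facilities, initially empty. When demand $x$ with prediction $\hat f_x$ arrives, let $f_{open}=\arg\min_{j\in\mathcal O}d(x,j)$. If $d(x,\hat f_x)>f$, open a facility at $x$ (add to $\mathcal O$). Otherwise let $r_x=d(f_{open},\hat f_x)$ (with $r_x=\infty$ if $\mathcal O=\emptyset$) and open a facility at $\hat f_x$ with probability $\min\{1,r_x/f\}$ (adding it to $\mathcal O$ on success). The demand $x$ is then connected to its nearest open facility. *)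

theory Defs
  imports "HOL-Probability.Probability"
begin

text \<open>An instance is a list of (demand, prediction) pairs, in arrival order.\<close>

definition ofl_valid :: "'a list \<Rightarrow> 'a set \<Rightarrow> (nat \<Rightarrow> 'a) \<Rightarrow> bool" where
  "ofl_valid xs F \<sigma> \<longleftrightarrow> finite F \<and> (\<forall>i<length xs. \<sigma> i \<in> F)"

definition ofl_cost :: "real \<Rightarrow> 'a::metric_space list \<Rightarrow> 'a set \<Rightarrow> (nat \<Rightarrow> 'a) \<Rightarrow> real" where
  "ofl_cost f xs F \<sigma> = f * real (card F) + (\<Sum>i<length xs. dist (xs ! i) (\<sigma> i))"

definition ofl_OPT :: "real \<Rightarrow> 'a::metric_space list \<Rightarrow> real" where
  "ofl_OPT f xs = (INF p \<in> {(F, \<sigma>). ofl_valid xs F \<sigma>}. ofl_cost f xs (fst p) (snd p))"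

definition ofl_optimal :: "real \<Rightarrow> 'a::metric_space list \<Rightarrow> 'a set \<Rightarrow> (nat \<Rightarrow> 'a) \<Rightarrow> bool" where
  "ofl_optimal f xs F \<sigma> \<longleftrightarrow> ofl_valid xs F \<sigma> \<and>
     (\<forall>F' \<sigma>'. ofl_valid xs F' \<sigma>' \<longrightarrow> ofl_cost f xs F \<sigma> \<le> ofl_cost f xs F' \<sigma>')"

text \<open>Prediction error eta_1 w.r.t. the fixed optimal assignment cstar (c^*_x of the i-th demand).\<close>

definition eta1 :: "('a::metric_space \<times> 'a) list \<Rightarrow> (nat \<Rightarrow> 'a) \<Rightarrow> real" where
  "eta1 D cstar = (\<Sum>i<length D. dist (snd (D ! i)) (cstar i))"

definition nearest_rule :: "('a set \<Rightarrow> 'a \<Rightarrow> 'a::metric_space) \<Rightarrow> bool" where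
  "nearest_rule tb \<longleftrightarrow> (\<forall>S x. finite S \<and> S \<noteq> {} \<longrightarrow>
      tb S x \<in> S \<and> (\<forall>j\<in>S. dist x (tb S x) \<le> dist x j))"

text \<open>State: (set of open facilities, accumulated connection cost).\<close>

definition predfl_open :: "real \<Rightarrow> ('a set \<Rightarrow> 'a \<Rightarrow> 'a::metric_space) \<Rightarrow> 'a \<Rightarrow> 'a \<Rightarrow> 'a set \<Rightarrow> 'a set pmf" where
  "predfl_open f tb x p S =
     (if dist x p > f then return_pmf (insert x S)
      else if S = {} then return_pmf (insert p S)
      else map_pmf (\<lambda>b. if b then insert p S else S)
             (bernoulli_pmf (min 1 (dist (tb S x) p / f))))"

definition predfl_step :: "real \<Rightarrow> ('a set \<Rightarrow> 'a \<Rightarrow> 'a::metric_space) \<Rightarrow> 'a \<times> 'a \<Rightarrow> 'a set \<times> real \<Rightarrow> ('a set \<times> real) pmf" where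
  "predfl_step f tb d s =
     map_pmf (\<lambda>S'. (S', snd s + infdist (fst d) S')) (predfl_open f tb (fst d) (snd d) (fst s))"

fun predfl_run :: "real \<Rightarrow> ('a set \<Rightarrow> 'a \<Rightarrow> 'a::metric_space) \<Rightarrow> ('a \<times> 'a) list \<Rightarrow> 'a set \<times> real \<Rightarrow> ('a set \<times> real) pmf" where
  "predfl_run f tb [] s = return_pmf s"
| "predfl_run f tb (d # ds) s = bind_pmf (predfl_step f tb d s) (predfl_run f tb ds)"

definition predfl_expected_cost :: "real \<Rightarrow> ('a set \<Rightarrow> 'a \<Rightarrow> 'a::metric_space) \<Rightarrow> ('a \<times> 'a) list \<Rightarrow> real" where
  "predfl_expected_cost f tb D =
     measure_pmf.expectation (predfl_run f tb D ({}, 0)) (\<lambda>s. f * real (card (fst s)) + snd s)"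

end

theory Submission imports Defs begin

text \<open>Potential argument. From a state with open facilities S and accumulated cost a, the
  expected final cost is at most f |S| + a + \<Sum> d(x, p_x) + 2 f |P - S| over the remaining
  demands x with predictions p_x, P being their set of predictions. In a step that tosses
  a coin, the facility at the prediction opens with probability p = min 1 (r/f); if it does
  not open, the demand pays at most r more than d(x, p_x), and (1 - p) r \<le> p f, so the
  expected extra connection cost is covered by the expected opening cost, while opening
  removes p_x from P - S and releases 2 f. With zero prediction error the predictions are
  optimal facilities, so the initial potential is at most twice the optimal cost.\<close>

lemma measure_pmf_expectation_bind_finite:
  fixes h :: "'b \<Rightarrow> real"
  assumes "finite (set_pmf p)" "\<And>x. x \<in> set_pmf p \<Longrightarrow> finite (set_pmf (q x))"
  shows "measure_pmf.expectation (bind_pmf p q) h =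
         measure_pmf.expectation p (\<lambda>x. measure_pmf.expectation (q x) h)"
proof -
  have "measure_pmf.expectation (bind_pmf p q) h =
     (\<Sum>a\<in>set_pmf p. pmf p a *\<^sub>R measure_pmf.expectation (q a) h)"
    using assms by (intro pmf_expectation_bind) auto
  also have "\<dots> = measure_pmf.expectation p (\<lambda>x. measure_pmf.expectation (q x) h)"
    using assms by (subst integral_measure_pmf[of "set_pmf p"]) auto
  finally show ?thesis .
qed

lemma finite_set_pmf_predfl_open: "finite (set_pmf (predfl_open f tb x p S))"
  unfolding predfl_open_def by (auto intro!: finite_imageI)

lemma finite_set_pmf_predfl_run: "finite (set_pmf (predfl_run f tb ds s))"
  by (induction ds arbitrary: s) (simp_all add: predfl_step_def finite_set_pmf_predfl_open)

definition predfl_cost_from :: "real \<Rightarrow> ('a set \<Rightarrow> 'a \<Rightarrow> 'a::metric_space) \<Rightarrow> ('a \<times> 'a) list \<Rightarrow> 'a set \<Rightarrow> real \<Rightarrow> real" where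
  "predfl_cost_from f tb ds S a =
     measure_pmf.expectation (predfl_run f tb ds (S, a)) (\<lambda>s. f * real (card (fst s)) + snd s)"

lemma predfl_cost_from_Nil: "predfl_cost_from f tb [] S a = f * real (card S) + a"
  by (simp add: predfl_cost_from_def)

lemma predfl_cost_from_Cons:
  "predfl_cost_from f tb ((x, p) # ds) S a =
     measure_pmf.expectation (predfl_open f tb x p S)
       (\<lambda>S'. predfl_cost_from f tb ds S' (a + infdist x S'))"
  unfolding predfl_cost_from_def predfl_run.simps
  by (subst measure_pmf_expectation_bind_finite)
     (simp_all add: predfl_step_def finite_set_pmf_predfl_open finite_set_pmf_predfl_run)

lemma predfl_expected_cost_eq_cost_from:
  "predfl_expected_cost f tb D = predfl_cost_from f tb D {} 0"
  unfolding predfl_expected_cost_def predfl_cost_from_def ..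

lemma one_minus_min_ratio_mult_le:
  fixes f r :: real
  assumes "f > 0" "r \<ge> 0"
  shows "(1 - min 1 (r / f)) * r \<le> min 1 (r / f) * f"
proof (cases "r / f \<le> 1")
  case True
  then have "min 1 (r / f) * f = r" using assms(1) by simp
  then show ?thesis using assms by (simp add: algebra_simps)
qed (use assms in simp)

lemma expectation_predfl_open_le:
  fixes f R :: real and E :: "'a::metric_space set \<Rightarrow> real \<Rightarrow> real"
  assumes f: "f > 0" and tb: "S \<noteq> {} \<Longrightarrow> tb S x \<in> S"
    and S: "finite S" and A: "finite A"
    and E: "\<And>S' b. finite S' \<Longrightarrow> E S' b \<le> f * real (card S') + b + R + 2 * f * real (card (A - S'))"
  shows "measure_pmf.expectation (predfl_open f tb x p S) (\<lambda>S'. E S' (a + infdist x S'))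
      \<le> f * real (card S) + a + dist x p + R + 2 * f * real (card (insert p A - S))"
    (is "?E \<le> ?Q")
proof -
  define K where "K = real (card (insert p A - S))"
  have card_le_K: "2 * f * real (card (A - S')) \<le> 2 * f * K" if "S \<subseteq> S'" for S'
    using f A that unfolding K_def by (auto intro!: card_mono)
  have K_insert: "K = real (card (A - insert p S)) + 1" if "p \<notin> S"
  proof -
    have "insert p A - S = insert p (A - insert p S)" using that by auto
    then show ?thesis unfolding K_def using A by simp
  qed
  consider "dist x p > f" | "dist x p \<le> f" "S = {}"
    | "dist x p \<le> f" "S \<noteq> {}" "p \<in> S" | "dist x p \<le> f" "S \<noteq> {}" "p \<notin> S"
    by fastforce
  then show ?thesis
  proof cases
    case 1
    have "?E = E (insert x S) a" by (simp add: predfl_open_def 1)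
    also have "\<dots> \<le> f * real (card (insert x S)) + a + R + 2 * f * K"
      by (rule order.trans[OF E]) (use card_le_K[of "insert x S"] S in auto)
    also have "\<dots> \<le> ?Q"
      using 1 f S by (simp add: card_insert_if K_def algebra_simps)
    finally show ?thesis .
  next
    case 2
    have "?E = E {p} (a + dist x p)" by (simp add: predfl_open_def 2 leD infdist_singleton)
    also have "\<dots> \<le> ?Q"
      using E[of "{p}" "a + dist x p"] K_insert 2 f unfolding K_def by (simp add: algebra_simps)
    finally show ?thesis .
  next
    case 3
    have "predfl_open f tb x p S = return_pmf S"
      using 3 by (simp add: predfl_open_def leD insert_absorb map_pmf_const cong: if_cong)
    then have "?E = E S (a + infdist x S)" by simp
    also have "\<dots> \<le> ?Q"
      using E[OF S, of "a + infdist x S"] card_le_K[of S] infdist_le[OF \<open>p \<in> S\<close>, of x]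
      unfolding K_def by simp
    finally show ?thesis .
  next
    case 4
    define r where "r = dist (tb S x) p"
    define q where "q = min 1 (r / f)"
    have q: "0 \<le> q" "q \<le> 1" unfolding q_def r_def using f by auto
    have "infdist x S \<le> dist x (tb S x)" using tb 4 by (simp add: infdist_le)
    also have "\<dots> \<le> dist x p + r" unfolding r_def by (metis dist_commute dist_triangle)
    finally have far: "E S (a + infdist x S) \<le> ?Q + r"
      using E[OF S, of "a + infdist x S"] card_le_K[of S] unfolding K_def by simp
    have near: "E (insert p S) (a + infdist x (insert p S)) \<le> ?Q - f"
      using E[of "insert p S" "a + infdist x (insert p S)"] infdist_le[of p "insert p S" x]
        K_insert 4 S unfolding K_def by (simp add: algebra_simps)
    have "?E = q * E (insert p S) (a + infdist x (insert p S)) + (1 - q) * E S (a + infdist x S)"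
      using 4 q unfolding q_def r_def by (simp add: predfl_open_def algebra_simps)
    also have "\<dots> \<le> q * (?Q - f) + (1 - q) * (?Q + r)"
      using near far q by (intro add_mono mult_left_mono) auto
    also have "\<dots> = ?Q - (q * f - (1 - q) * r)" by (simp add: algebra_simps)
    also have "\<dots> \<le> ?Q"
      using one_minus_min_ratio_mult_le[OF f, of r] unfolding q_def r_def by simp
    finally show ?thesis .
  qed
qed

lemma predfl_cost_from_le:
  fixes f :: real and tb :: "'a set \<Rightarrow> 'a \<Rightarrow> 'a::metric_space"
  assumes f: "f > 0" and tb: "\<And>S x. finite S \<Longrightarrow> S \<noteq> {} \<Longrightarrow> tb S x \<in> S" and "finite S"
  shows "predfl_cost_from f tb ds S a \<le> f * real (card S) + a
     + (\<Sum>d\<leftarrow>ds. dist (fst d) (snd d)) + 2 * f * real (card (snd ` set ds - S))"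
  using \<open>finite S\<close>
proof (induction ds arbitrary: S a)
  case Nil
  then show ?case by (simp add: predfl_cost_from_Nil)
next
  case (Cons d ds)
  obtain x p where d: "d = (x, p)" by fastforce
  have "predfl_cost_from f tb ((x, p) # ds) S a \<le> f * real (card S) + a + dist x p
      + (\<Sum>d\<leftarrow>ds. dist (fst d) (snd d)) + 2 * f * real (card (insert p (snd ` set ds) - S))"
    unfolding predfl_cost_from_Cons
    by (rule expectation_predfl_open_le[OF f]) (use Cons tb in auto)
  then show ?case by (simp add: d algebra_simps)
qed

lemma nearest_rule_in: "nearest_rule tb \<Longrightarrow> finite S \<Longrightarrow> S \<noteq> {} \<Longrightarrow> tb S x \<in> S"
  unfolding nearest_rule_def by blast

lemma predfl_expected_cost_le:
  assumes "f > 0" "nearest_rule tb"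
  shows "predfl_expected_cost f tb D
    \<le> (\<Sum>d\<leftarrow>D. dist (fst d) (snd d)) + 2 * f * real (card (snd ` set D))"
  using predfl_cost_from_le[OF assms(1) nearest_rule_in[OF assms(2)], where S="{}" and ds=D and a=0]
  by (simp add: predfl_expected_cost_eq_cost_from)

lemma ofl_optimal_cost_eq_OPT:
  assumes "ofl_optimal f xs F \<sigma>"
  shows "ofl_cost f xs F \<sigma> = ofl_OPT f xs"
proof -
  let ?V = "{(F, \<sigma>). ofl_valid xs F \<sigma>}"
  have opt: "ofl_cost f xs F \<sigma> \<le> ofl_cost f xs (fst v) (snd v)" if "v \<in> ?V" for v
    using assms that unfolding ofl_optimal_def by auto
  have "(F, \<sigma>) \<in> ?V" using assms unfolding ofl_optimal_def by simp
  moreover have "bdd_below ((\<lambda>v. ofl_cost f xs (fst v) (snd v)) ` ?V)"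
    using opt by (auto intro!: bdd_belowI2)
  ultimately show ?thesis
    unfolding ofl_OPT_def using opt by (intro antisym cINF_greatest) (force dest: cINF_lower)+
qed

lemma eta1_eq_0_iff: "eta1 D cstar = 0 \<longleftrightarrow> (\<forall>i<length D. snd (D ! i) = cstar i)"
  unfolding eta1_def by (subst sum_nonneg_eq_0_iff) auto

theorem theorem3p1:
  fixes f :: real and D :: "('a::metric_space \<times> 'a) list"
    and tb :: "'a set \<Rightarrow> 'a \<Rightarrow> 'a" and Fstar :: "'a set" and cstar :: "nat \<Rightarrow> 'a"
  assumes "f > 0"
    and "nearest_rule tb"
    and "ofl_optimal f (map fst D) Fstar cstar"
    and "eta1 D cstar = 0"
  shows "predfl_expected_cost f tb D \<le> 2 * ofl_OPT f (map fst D)"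
proof -
  have pred: "\<And>i. i < length D \<Longrightarrow> snd (D ! i) = cstar i"
    using assms(4) eta1_eq_0_iff by blast
  have "ofl_valid (map fst D) Fstar cstar"
    using assms(3) unfolding ofl_optimal_def by blast
  then have Fstar: "finite Fstar" "\<And>i. i < length D \<Longrightarrow> cstar i \<in> Fstar"
    unfolding ofl_valid_def by auto
  have "snd ` set D \<subseteq> Fstar"
    using pred Fstar(2) by (force simp: in_set_conv_nth)
  then have "2 * f * real (card (snd ` set D)) \<le> 2 * f * real (card Fstar)"
    using assms(1) Fstar(1) by (simp add: card_mono)
  moreover have "(\<Sum>d\<leftarrow>D. dist (fst d) (snd d)) = (\<Sum>i<length D. dist (fst (D ! i)) (cstar i))"
    using pred by (simp add: sum_list_sum_nth atLeast0LessThan)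
  moreover have "(\<Sum>i<length D. dist (fst (D ! i)) (cstar i)) \<ge> 0" by (simp add: sum_nonneg)
  ultimately have "predfl_expected_cost f tb D \<le> 2 * ofl_cost f (map fst D) Fstar cstar"
    using predfl_expected_cost_le[OF assms(1,2), of D] by (simp add: ofl_cost_def)
  then show ?thesis using ofl_optimal_cost_eq_OPT[OF assms(3)] by simp
qed

end
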